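(* Let $r\geq 1$ be an integer, let $a,\mu$ be real parameters, and let $\mathbf{n}=(n_1,\dots,n_r)\in\mathbb{N}_0^r$. For $\boldsymbol{\xi}=(\xi_1,\dots,\xi_r)\in\mathbb{R}^r$, the Fourier transform of $f_r(\mathbf{x};\mathbf{n},a,\mu)$ satisfies \begin{multline*} \mathcal{F}\big(f_r(x_1,\dots,x_r;n_1,\dots,n_r,a,\mu)\big)(\xi_1,\dots,\xi_r) =\frac{2^{|\mathbf{n}^2|+2a+\frac{r-3}{2}}\left(2\left(|\mathbf{n}^2|+\mu+\frac{r-1}{2}\right)\right)_{n_1}}{n_1!}\\ \times B\left(a+\frac{|\mathbf{n}^2|+i\xi_1}{2}+\frac{r-1}{4},\ a+\frac{|\mathbf{n}^2|-i\xi_1}{2}+\frac{r-1}{4}\right)\\ \times {}_3F_2\left(\begin{matrix}-n_1,\ n_1+2\left(|\mathbf{n}^2|+\mu+\frac{r-1}{2}\right),\ a+\frac{|\mathbf{n}^2|+i\xi_1}{2}+\frac{r-1}{4}\\ |\mathbf{n}^2|+2a+\frac{r-1}{2},\ |\mathbf{n}^2|+\mu+\frac{r}{2}\end{matrix}\;\Big|\;1\right)\\ \times \mathcal{F}\big(f_{r-1}(x_2,\dots,x_r;n_2,\dots,n_r,a,\mu)\big)(\xi_2,\dots,\xi_r), \end{multline*} and also \begin{multline*} \mathcal{F}\big(f_r(x_1,\dots,x_r;n_1,\dots,n_r,a,\mu)\big)(\xi_1,\dots,\xi_r) =\frac{2^{2a-1}(2\mu)_{n_r}}{n_r!}B\left(a+\frac{i\xi_r}{2},\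 a-\frac{i\xi_r}{2}\right)\\ \times {}_3F_2\left(\begin{matrix}-n_r,\ n_r+2\mu,\ a+\frac{i\xi_r}{2}\\ 2a,\ \mu+\frac12\end{matrix}\;\Big|\;1\right)\\ \times \mathcal{F}\Big(f_{r-1}\Big(x_1,\dots,x_{r-1};n_1,\dots,n_{r-1},a+\frac{n_r}{2}+\frac14,\mu+n_r+\frac12\Big)\Big)(\xi_1,\dots,\xi_{r-1}). \end{multline*}
   Context: Pochhammer symbol: $(\alpha)_0=1$, $(\alpha)_n=\alpha(\alpha+1)\cdots(\alpha+n-1)$ for $n\ge1$. Generalized hypergeometric series: ${}_pF_q\left(\begin{matrix}a_1,\dots,a_p\\ b_1,\dots,b_q\end{matrix}\mid x\right)=\sum_{k\ge0}\frac{(a_1)_k\cdots(a_p)_k}{(b_1)_k\cdots(b_q)_k}\frac{x^k}{k!}$ (here always terminating because of a numerator $-n$). Beta function $B(p,q)=\Gamma(p)\Gamma(q)/\Gamma(p+q)$. Gegenbauer polynomials: $C_n^{(\lambda)}(x)=\frac{(2\lambda)_n}{n!}\,{}_2F_1\left(\begin{matrix}-n,\ n+2\lambda\\ \lambda+\frac12\end{matrix}\mid\frac{1-x}{2}\right)$. Notation: for $\mathbf{n}=(n_1,\dots,n_s)$, $\mathbf{n}^j=(n_j,\dots,n_s)$, $|\mathbf{n}^j|=n_j+\cdots+n_s$ for $1\le j\le s$, and $|\mathbf{n}^{s+1}|=0$. For $\boldsymbol{y}=(y_1,\dots,y_s)$, $\boldsymbol{y}_0=0$, $\boldsymbol{y}_j=(y_1,\dots,y_j)$,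 $\|\cdot\|$ the Euclidean norm. Ball polynomials in $s$ variables: $P^{\mu}_{\mathbf{n}}(\boldsymbol{y})=\prod_{j=1}^{s}(1-\|\boldsymbol{y}_{j-1}\|^2)^{n_j/2}C^{(\lambda_j)}_{n_j}\big(y_j/\sqrt{1-\|\boldsymbol{y}_{j-1}\|^2}\big)$ with $\lambda_j=\mu+|\mathbf{n}^{j+1}|+\frac{s-j}{2}$. For $s\ge1$, real $a,\mu$, $\mathbf{k}=(k_1,\dots,k_s)\in\mathbb{N}_0^s$ and real $y_1,\dots,y_s$, define $f_s(y_1,\dots,y_s;k_1,\dots,k_s,a,\mu)=\prod_{j=1}^{s}(1-\tanh^2 y_j)^{a+\frac{s-j}{4}}\,P^{\mu}_{\mathbf{k}}(\upsilon_1,\dots,\upsilon_s)$, where $\upsilon_1=\tanh y_1$ and $\upsilon_j=\tanh y_j\sqrt{(1-\tanh^2y_1)\cdots(1-\tanh^2 y_{j-1})}$ for $j\ge2$. Convention: $f_0\equiv 1$ with Fourier transform equal to $1$ (relevant only when $r=1$). Fourier transform in $s$ variables: $\mathcal{F}(f)(\xi_1,\dots,\xi_s)=\int_{\mathbb{R}^s}e^{-i(\xi_1y_1+\cdots+\xi_sy_s)}f(y_1,\dots,y_s)\,dy_1\cdots dy_s$. *)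

theory Defs
  imports "HOL-Analysis.Analysis" "HOL-Probability.Probability"
begin

text \<open>Generalized hypergeometric series pFq (as an infinite series; in the theorem it
  always terminates because of a numerator parameter -n).\<close>
definition hypergeom :: "'a::{real_normed_field,banach} list \<Rightarrow> 'a list \<Rightarrow> 'a \<Rightarrow> 'a" where
  "hypergeom as bs x =
     (\<Sum>k. (\<Prod>a\<leftarrow>as. pochhammer a k) / (\<Prod>b\<leftarrow>bs. pochhammer b k) * x ^ k / fact k)"

definition gegenbauer :: "nat \<Rightarrow> real \<Rightarrow> real \<Rightarrow> real" where
  "gegenbauer n lam x =
     pochhammer (2 * lam) n / fact n *
     hypergeom [- real n, real n + 2 * lam] [lam + 1/2] ((1 - x) / 2)"

text \<open>Ball polynomial P^mu_k(v) in s variables; k = [k_1,...,k_s] (list of length s),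
  variables v_1..v_s are v 0 .. v (s-1) (0-based).  lambda_j (0-based j) is
  mu + |k^{j+2}| + (s-1-j)/2 in 1-based paper notation.\<close>
definition ball_lambda :: "nat \<Rightarrow> real \<Rightarrow> nat list \<Rightarrow> nat \<Rightarrow> real" where
  "ball_lambda s mu k j = mu + real (\<Sum>i\<in>{Suc j..<s}. k ! i) + (real s - 1 - real j) / 2"

definition ball_poly :: "nat \<Rightarrow> real \<Rightarrow> nat list \<Rightarrow> (nat \<Rightarrow> real) \<Rightarrow> real" where
  "ball_poly s mu k v =
     (\<Prod>j<s. sqrt (1 - (\<Sum>i<j. (v i)\<^sup>2)) ^ (k ! j) *
        gegenbauer (k ! j) (ball_lambda s mu k j) (v j / sqrt (1 - (\<Sum>i<j. (v i)\<^sup>2))))"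

definition upsilon :: "(nat \<Rightarrow> real) \<Rightarrow> nat \<Rightarrow> real" where
  "upsilon y j = tanh (y j) * sqrt (\<Prod>i<j. 1 - (tanh (y i))\<^sup>2)"

definition f_fun :: "nat \<Rightarrow> nat list \<Rightarrow> real \<Rightarrow> real \<Rightarrow> (nat \<Rightarrow> real) \<Rightarrow> real" where
  "f_fun s k a mu y =
     (\<Prod>j<s. (1 - (tanh (y j))\<^sup>2) powr (a + (real s - 1 - real j) / 4)) *
     ball_poly s mu k (upsilon y)"

text \<open>Fourier transform in s variables (Lebesgue integral over R^s, realised as the
  product measure of s copies of lborel). For s = 0 this is evaluation, i.e. F(f_0) = 1.\<close>
definition fourier :: "nat \<Rightarrow> ((nat \<Rightarrow> real) \<Rightarrow> real) \<Rightarrow> (nat \<Rightarrow> real) \<Rightarrow> complex" where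
  "fourier s f \<xi> =
     (LINT y | PiM {..<s} (\<lambda>_. lborel). cis (- (\<Sum>j<s. \<xi> j * y j)) * complex_of_real (f y))"

end

theory Submission
  imports Defs
begin

text \<open>Because \<open>1 - (\<upsilon>\<^sub>1\<^sup>2 + ... + \<upsilon>\<^sub>j\<^sup>2) = (1 - tanh\<^sup>2 y\<^sub>1) ... (1 - tanh\<^sup>2 y\<^sub>j)\<close>, the square roots
  in the ball polynomial move onto the weights, and \<open>f\<^sub>s\<close> is a product of one-variable functions
  \<open>(1 - tanh\<^sup>2 y)\<^sup>\<beta> C\<^sub>k\<^sup>\<lambda>(tanh y)\<close>. By Fubini its Fourier transform is the product of their
  one-dimensional transforms. Writing the Gegenbauer polynomial as a terminating \<open>\<^sub>2F\<^sub>1\<close> in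
  \<open>(1 - tanh t) / 2 = 1 / (1 + exp (2 t))\<close>, each monomial yields, after \<open>u = exp (2 t)\<close>, a Beta
  integral \<open>B(\<beta> - i\<xi>/2, \<beta> + j + i\<xi>/2) = B(\<beta> - i\<xi>/2, \<beta> + i\<xi>/2) (\<beta> + i\<xi>/2)\<^sub>j / (2\<beta>)\<^sub>j\<close>, and
  resumming gives the \<open>\<^sub>3F\<^sub>2\<close> at 1. Both recursions split off the first or the last factor;
  the remaining factors are those of \<open>f\<^sub>r\<^sub>-\<^sub>1\<close> with the shifted parameters.\<close>

text \<open>The integrand of Euler's integral for \<open>Gamma p\<close> after the substitution \<open>t = exp x\<close>.\<close>
definition exp_Gamma_kernel :: "complex \<Rightarrow> real \<Rightarrow> complex" where
  "exp_Gamma_kernel p x = exp (p * of_real x) * of_real (exp (- exp x))"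

lemma exp_Gamma_kernel_measurable [measurable]: "exp_Gamma_kernel p \<in> borel_measurable borel"
  unfolding exp_Gamma_kernel_def by measurable

lemma
  fixes p :: complex
  assumes p: "Re p > 0"
  shows integrable_exp_Gamma_kernel: "integrable lborel (exp_Gamma_kernel p)"
    and integral_exp_Gamma_kernel: "integral\<^sup>L lborel (exp_Gamma_kernel p) = Gamma p"
proof -
  define f where "f = (\<lambda>t::real. complex_of_real t powr (p - 1) / of_real (exp t))"
  have range_exp: "range exp = {0::real<..}"
    by (auto, metis exp_ln rangeI)
  have "f absolutely_integrable_on range exp \<and> integral (range exp) f = Gamma p"
    unfolding range_exp f_def
    using absolutely_integrable_Gamma_integral'[OF p] Gamma_integral_complex'[OF p]
    by (auto dest: integral_unique)
  then have "(\<lambda>x. \<bar>exp x\<bar> *\<^sub>R f (exp x)) absolutely_integrable_on UNIV \<and>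
       integral UNIV (\<lambda>x. \<bar>exp x\<bar> *\<^sub>R f (exp x)) = Gamma p"
    by (subst has_absolute_integral_change_of_variables_real[where g=exp and h=exp])
       (auto intro!: derivative_eq_intros simp: inj_def)
  moreover have "\<bar>exp x\<bar> *\<^sub>R f (exp x) = exp_Gamma_kernel p x" for x
  proof -
    have "complex_of_real (exp x) powr (p - 1) = exp ((p - 1) * of_real x)"
      by (simp add: powr_def Ln_of_real)
    then show ?thesis
      by (simp add: f_def exp_Gamma_kernel_def scaleR_conv_of_real exp_diff exp_minus field_simps
          exp_of_real)
  qed
  ultimately have abs_int: "exp_Gamma_kernel p absolutely_integrable_on UNIV"
    and int: "integral UNIV (exp_Gamma_kernel p) = Gamma p"
    by auto
  show "integrable lborel (exp_Gamma_kernel p)"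
    using abs_int unfolding set_integrable_def by (simp add: integrable_completion)
  show "integral\<^sup>L lborel (exp_Gamma_kernel p) = Gamma p"
    using set_lebesgue_integral_eq_integral(2)[OF abs_int] int
    by (simp add: set_lebesgue_integral_def integral_completion)
qed

lemma lborel_integrable_translate_iff:
  fixes f :: "real \<Rightarrow> 'a :: {banach, second_countable_topology}"
  shows "integrable lborel (\<lambda>x. f (x + t)) \<longleftrightarrow> integrable lborel f"
  using lborel_integrable_real_affine_iff[of 1 f t] by (simp add: add.commute)

lemma lborel_integral_translate:
  fixes f :: "real \<Rightarrow> 'a :: {banach, second_countable_topology}"
  shows "(LINT x|lborel. f (x + t)) = integral\<^sup>L lborel f"
  using lborel_integral_real_affine[of 1 f t] by (simp add: add.commute)

lemma integrable_exp_Gamma_kernel_convolution: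
  assumes "Re p > 0" and "Re q > 0"
  shows "integrable (lborel \<Otimes>\<^sub>M lborel)
    (\<lambda>(y, s). exp_Gamma_kernel p (s + y) * exp_Gamma_kernel q y)"
proof (rule lborel_pair.Fubini_integrable)
  have "(\<lambda>y. LINT s|lborel. norm (exp_Gamma_kernel p (s + y) * exp_Gamma_kernel q y))
      = (\<lambda>y. norm (exp_Gamma_kernel q y) * (LINT s|lborel. norm (exp_Gamma_kernel p s)))"
    using lborel_integral_translate[of "\<lambda>s. norm (exp_Gamma_kernel p s)"]
    by (simp add: norm_mult mult.commute)
  then show "integrable lborel
      (\<lambda>y. LINT s|lborel. norm (case (y, s) of (y, s) \<Rightarrow> exp_Gamma_kernel p (s + y) * exp_Gamma_kernel q y))"
    using integrable_exp_Gamma_kernel[OF assms(2)] by (simp add: integrable_norm)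
  show "AE y in lborel. integrable lborel
      (\<lambda>s. case (y, s) of (y, s) \<Rightarrow> exp_Gamma_kernel p (s + y) * exp_Gamma_kernel q y)"
    using integrable_exp_Gamma_kernel[OF assms(1)]
    by (simp add: lborel_integrable_translate_iff)
qed simp

lemma exp_Gamma_kernel_mult:
  assumes "p + q = of_real m"
  shows "exp_Gamma_kernel p (s + y) * exp_Gamma_kernel q y =
    exp (p * of_real s) * of_real ((1 + exp s) powr (- m)) *
    exp_Gamma_kernel (of_real m) (y + ln (1 + exp s))"
proof -
  define c where "c = 1 + exp s"
  have c: "c > 0" by (simp add: c_def add_pos_pos)
  have "exp (p * of_real (s + y)) * exp (q * of_real y) =
      exp (p * of_real s) * exp (of_real m * of_real y)"
    by (simp add: exp_add[symmetric] algebra_simps flip: assms)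
  also have "exp (of_real m * of_real y) =
      of_real (c powr (- m)) * (exp (of_real m * of_real (y + ln c)) :: complex)"
  proof -
    have "exp (of_real m * of_real (y + ln c)) =
        exp (of_real m * of_real y) * (exp (of_real m * of_real (ln c)) :: complex)"
      by (simp only: of_real_add distrib_left exp_add)
    moreover have "exp (of_real m * of_real (ln c)) = complex_of_real (c powr m)"
      using c by (simp add: powr_def exp_of_real mult.commute flip: of_real_mult)
    ultimately show ?thesis
      using c by (simp add: powr_minus)
  qed
  finally have complex_part: "exp (p * of_real (s + y)) * exp (q * of_real y) =
      exp (p * of_real s) * of_real (c powr (- m)) * exp (of_real m * of_real (y + ln c))"
    by (simp add: mult.assoc)
  have real_part: "exp (- exp (s + y)) * exp (- exp y) = exp (- exp (y + ln c))"
  proof -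
    have "exp (y + ln c) = exp y + exp (s + y)"
      using c by (simp add: exp_add c_def algebra_simps)
    then show ?thesis by (simp add: exp_add[symmetric] algebra_simps)
  qed
  have "exp_Gamma_kernel p (s + y) * exp_Gamma_kernel q y =
      exp (p * of_real (s + y)) * exp (q * of_real y) * of_real (exp (- exp (s + y)) * exp (- exp y))"
    by (simp add: exp_Gamma_kernel_def mult_ac)
  also have "\<dots> = exp (p * of_real s) * of_real ((1 + exp s) powr (- m)) *
      exp_Gamma_kernel (of_real m) (y + ln (1 + exp s))"
    unfolding complex_part real_part by (simp add: exp_Gamma_kernel_def c_def mult_ac)
  finally show ?thesis .
qed

text \<open>Write \<open>Gamma p * Gamma (m - p)\<close> as a double integral and integrate out \<open>y\<close> first: by
  \<open>exp_Gamma_kernel_mult\<close> this gives \<open>Gamma m\<close> times the Beta integrand in \<open>s\<close>.\<close>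
lemma
  fixes p :: complex
  assumes p: "Re p > 0" and pm: "Re p < m"
  shows integrable_Beta_exp:
      "integrable lborel (\<lambda>s. exp (p * of_real s) * of_real ((1 + exp s) powr (- m)))"
    and integral_Beta_exp:
      "(LINT s|lborel. exp (p * of_real s) * of_real ((1 + exp s) powr (- m))) = Beta p (of_real m - p)"
proof -
  define q where "q = of_real m - p"
  define B where "B = (\<lambda>s. exp (p * of_real s) * of_real ((1 + exp s) powr (- m)))"
  define F where "F = (\<lambda>(y, s). exp_Gamma_kernel p (s + y) * exp_Gamma_kernel q y)"
  have q: "Re q > 0" and m: "m > 0" using p pm by (simp_all add: q_def)
  have F_int: "integrable (lborel \<Otimes>\<^sub>M lborel) F"
    unfolding F_def by (rule integrable_exp_Gamma_kernel_convolution[OF p q])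
  have inner_s: "(LINT s|lborel. F (y, s)) = Gamma p * exp_Gamma_kernel q y" for y
    using lborel_integral_translate[of "exp_Gamma_kernel p" y] integral_exp_Gamma_kernel[OF p]
    by (simp add: F_def)
  have inner_y: "(LINT y|lborel. F (y, s)) = Gamma (of_real m) * B s" for s
    using exp_Gamma_kernel_mult[of p q m s] integral_exp_Gamma_kernel[of "of_real m"] m
      lborel_integral_translate[of "exp_Gamma_kernel (of_real m)" "ln (1 + exp s)"]
    by (simp add: F_def B_def q_def mult_ac)
  have m_nonpole: "(of_real m :: complex) \<notin> \<int>\<^sub>\<le>\<^sub>0"
    using m by (auto simp: of_real_in_nonpos_Ints_iff)
  then have Gamma_m: "Gamma (complex_of_real m) \<noteq> 0"
    by (simp add: Gamma_eq_zero_iff)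
  have "integrable lborel (\<lambda>s. LINT y|lborel. F (y, s))"
    using lborel_pair.integrable_fst'[OF lborel_pair.integrable_product_swap[OF F_int]]
    by (simp add: case_prod_beta)
  then have "integrable lborel (\<lambda>s. inverse (Gamma (of_real m)) * (Gamma (of_real m) * B s))"
    unfolding inner_y by (rule integrable_mult_right)
  then show "integrable lborel B"
    using Gamma_m by (simp add: field_simps)
  have "Gamma (of_real m) * integral\<^sup>L lborel B = (LINT s|lborel. LINT y|lborel. F (y, s))"
    by (simp add: inner_y)
  also have "\<dots> = (LINT y|lborel. LINT s|lborel. F (y, s))"
    using lborel_pair.Fubini_integral[of "\<lambda>y s. F (y, s)"] F_int by simp
  also have "\<dots> = Gamma p * Gamma q"
    by (simp add: inner_s integral_exp_Gamma_kernel[OF q])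
  also have "\<dots> = Beta p q * Gamma (of_real m)"
    using Gamma_Gamma_Beta[of p q] m_nonpole by (simp add: q_def)
  finally show "integral\<^sup>L lborel B = Beta p (of_real m - p)"
    using Gamma_m by (simp add: q_def)
qed

lemma one_minus_tanh_squared_pos: "1 - (tanh x)\<^sup>2 > (0::real)"
  using tanh_real_bounds[of x] by (simp add: abs_square_less_1 abs_less_iff)

text \<open>In the variable \<open>u = exp (2 y)\<close> one has \<open>1 - tanh\<^sup>2 y = 4 u / (1 + u)\<^sup>2\<close> and
  \<open>(1 - tanh y) / 2 = 1 / (1 + u)\<close>.\<close>
lemma tanh_weight_eq_exp:
  fixes y \<beta> :: real
  shows "(1 - (tanh y)\<^sup>2) powr \<beta> * ((1 - tanh y) / 2) ^ j
       = 4 powr \<beta> * exp (2 * \<beta> * y) * (1 + exp (2 * y)) powr (- (2 * \<beta> + real j))"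
proof -
  define u where "u = exp (2 * y)"
  have u: "u > 0" by (simp add: u_def)
  have tanh_u: "tanh y = (u - 1) / (u + 1)"
  proof -
    have "exp (- 2 * y) = 1 / u" by (simp add: u_def exp_minus inverse_eq_divide)
    then have "tanh y = (1 - 1 / u) / (1 + 1 / u)" by (simp only: tanh_real_altdef)
    then show ?thesis
      using u by (simp add: divide_simps)
  qed
  have "1 - (tanh y)\<^sup>2 = 4 * u / (1 + u)\<^sup>2"
    using u unfolding tanh_u by (simp add: divide_simps power2_eq_square) (simp add: algebra_simps)
  moreover have "((1 + u)\<^sup>2) powr \<beta> = (1 + u) powr (2 * \<beta>)"
    using u by (simp add: powr_powr flip: powr_numeral)
  ultimately have weight: "(1 - (tanh y)\<^sup>2) powr \<beta> = 4 powr \<beta> * u powr \<beta> / (1 + u) powr (2 * \<beta>)"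
    using u by (simp add: powr_divide powr_mult)
  have "(1 - tanh y) / 2 = 1 / (1 + u)"
    using u unfolding tanh_u by (simp add: divide_simps)
  then have "((1 - tanh y) / 2) ^ j = 1 / (1 + u) powr real j"
    using u by (simp only: powr_realpow power_one_over)
  moreover have "u powr \<beta> = exp (2 * \<beta> * y)"
    using u by (simp add: powr_def u_def)
  moreover have "(1 + u) powr (- (2 * \<beta> + real j)) = 1 / ((1 + u) powr (2 * \<beta>) * (1 + u) powr real j)"
    by (simp only: powr_minus powr_add inverse_mult_distrib divide_inverse)
  ultimately show ?thesis
    unfolding weight u_def[symmetric] by simp
qed

lemma
  fixes \<beta> \<xi> :: real
  assumes \<beta>: "\<beta> > 0"
  shows integrable_tanh_weight_fourier: "integrable lborel (\<lambda>t. cis (- (\<xi> * t)) *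
      of_real ((1 - (tanh t)\<^sup>2) powr \<beta> * ((1 - tanh t) / 2) ^ j))"
    and integral_tanh_weight_fourier: "(LINT t|lborel. cis (- (\<xi> * t)) *
      of_real ((1 - (tanh t)\<^sup>2) powr \<beta> * ((1 - tanh t) / 2) ^ j)) =
      of_real (2 powr (2 * \<beta> - 1)) *
      Beta (of_real \<beta> - \<i> * of_real \<xi> / 2) (of_real \<beta> + \<i> * of_real \<xi> / 2 + of_nat j)"
proof -
  define p where "p = complex_of_real \<beta> - \<i> * of_real \<xi> / 2"
  define m where "m = 2 * \<beta> + real j"
  define E where "E = (\<lambda>x::real. exp (p * of_real x) * complex_of_real ((1 + exp x) powr (- m)))"
  have p: "Re p > 0" "Re p < m" using \<beta> by (auto simp: p_def m_def)
  have integrand_eq: "cis (- (\<xi> * t)) * of_real ((1 - (tanh t)\<^sup>2) powr \<beta> * ((1 - tanh t) / 2) ^ j) =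
      of_real (4 powr \<beta>) * E (0 + 2 * t)" for t
  proof -
    have "exp (p * of_real (2 * t)) = of_real (exp (2 * \<beta> * t)) * cis (- (\<xi> * t))"
      by (simp add: p_def cis_conv_exp exp_of_real[symmetric] exp_add[symmetric] algebra_simps
          del: exp_of_real)
    then show ?thesis
      unfolding E_def tanh_weight_eq_exp m_def by (simp add: mult_ac)
  qed
  have "integrable lborel (\<lambda>t. E (0 + 2 * t))"
    using lborel_integrable_real_affine[OF integrable_Beta_exp[OF p], of 2 0] by (simp add: E_def)
  then show "integrable lborel (\<lambda>t. cis (- (\<xi> * t)) *
      of_real ((1 - (tanh t)\<^sup>2) powr \<beta> * ((1 - tanh t) / 2) ^ j))"
    unfolding integrand_eq by simp
  have "(LINT t|lborel. E (0 + 2 * t)) = Beta p (of_real m - p) / 2"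
    using lborel_integral_real_affine[of 2 E 0] integral_Beta_exp[OF p]
    by (simp add: E_def scaleR_conv_of_real)
  moreover have "of_real m - p = of_real \<beta> + \<i> * of_real \<xi> / 2 + of_nat j"
    by (simp add: m_def p_def complex_eq_iff)
  moreover have "(4::real) powr \<beta> = 2 * 2 powr (2 * \<beta> - 1)"
  proof -
    have "(4::real) = 2 powr 2" by simp
    then have "(4::real) powr \<beta> = 2 powr (2 * \<beta>)" by (simp only: powr_powr)
    also have "\<dots> = 2 * 2 powr (2 * \<beta> - 1)" by (simp add: powr_powr powr_diff)
    finally show ?thesis .
  qed
  ultimately show "(LINT t|lborel. cis (- (\<xi> * t)) *
      of_real ((1 - (tanh t)\<^sup>2) powr \<beta> * ((1 - tanh t) / 2) ^ j)) =
      of_real (2 powr (2 * \<beta> - 1)) *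
      Beta (of_real \<beta> - \<i> * of_real \<xi> / 2) (of_real \<beta> + \<i> * of_real \<xi> / 2 + of_nat j)"
    unfolding integrand_eq by (simp add: p_def ac_simps)
qed

lemma Beta_plus_of_nat_right:
  fixes x y :: complex
  assumes "y \<notin> \<int>\<^sub>\<le>\<^sub>0" and "x + y \<notin> \<int>\<^sub>\<le>\<^sub>0"
  shows "Beta x (y + of_nat j) = Beta x y * pochhammer y j / pochhammer (x + y) j"
  using assms Gamma_eq_zero_iff[of y] Gamma_eq_zero_iff[of "x + y"]
  by (simp add: Beta_def pochhammer_Gamma add.assoc field_simps)

lemma hypergeom_minus_of_nat:
  fixes x :: "'a::{real_normed_field,banach}"
  shows "hypergeom (- of_nat k # as) bs x =
    (\<Sum>j\<le>k. (\<Prod>a\<leftarrow>(- of_nat k # as). pochhammer a j) / (\<Prod>b\<leftarrow>bs. pochhammer b j) * x ^ j / fact j)"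
  unfolding hypergeom_def
  by (rule suminf_finite) (auto simp: pochhammer_of_nat_eq_0_iff)

definition gegenbauer_coeff :: "nat \<Rightarrow> real \<Rightarrow> nat \<Rightarrow> real" where
  "gegenbauer_coeff k l j =
     pochhammer (- real k) j * pochhammer (real k + 2 * l) j / pochhammer (l + 1/2) j / fact j"

lemma gegenbauer_eq_sum:
  "gegenbauer k l t =
     pochhammer (2 * l) k / fact k * (\<Sum>j\<le>k. gegenbauer_coeff k l j * ((1 - t) / 2) ^ j)"
  unfolding gegenbauer_def hypergeom_minus_of_nat gegenbauer_coeff_def by (simp add: mult_ac)

definition gegenbauer_tanh :: "real \<Rightarrow> real \<Rightarrow> nat \<Rightarrow> real \<Rightarrow> real" where
  "gegenbauer_tanh \<beta> l k t = (1 - (tanh t)\<^sup>2) powr \<beta> * gegenbauer k l (tanh t)"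

definition gegenbauer_tanh_fourier :: "real \<Rightarrow> real \<Rightarrow> nat \<Rightarrow> real \<Rightarrow> complex" where
  "gegenbauer_tanh_fourier \<beta> l k \<xi> =
     complex_of_real (2 powr (2 * \<beta> - 1) * pochhammer (2 * l) k / fact k)
     * Beta (complex_of_real \<beta> + \<i> * complex_of_real \<xi> / 2) (complex_of_real \<beta> - \<i> * complex_of_real \<xi> / 2)
     * hypergeom
         [- complex_of_real (real k), complex_of_real (real k + 2 * l),
          complex_of_real \<beta> + \<i> * complex_of_real \<xi> / 2]
         [complex_of_real (2 * \<beta>), complex_of_real (l + 1/2)] 1"

lemma gegenbauer_tanh_fourier_eq_Beta_sum:
  fixes \<beta> \<xi> :: real
  assumes \<beta>: "\<beta> > 0"
  shows "gegenbauer_tanh_fourier \<beta> l k \<xi> =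
    (\<Sum>j\<le>k. of_real (pochhammer (2 * l) k / fact k * gegenbauer_coeff k l j) *
      (of_real (2 powr (2 * \<beta> - 1)) *
       Beta (of_real \<beta> - \<i> * of_real \<xi> / 2) (of_real \<beta> + \<i> * of_real \<xi> / 2 + of_nat j)))"
proof -
  define x where "x = complex_of_real \<beta> - \<i> * complex_of_real \<xi> / 2"
  define y where "y = complex_of_real \<beta> + \<i> * complex_of_real \<xi> / 2"
  have xy: "x + y = of_real (2 * \<beta>)" by (simp add: x_def y_def)
  have "z \<notin> \<int>\<^sub>\<le>\<^sub>0" if "Re z > 0" for z :: complex
    using that by (auto elim!: nonpos_Ints_cases)
  then have nonpoles: "y \<notin> \<int>\<^sub>\<le>\<^sub>0" "x + y \<notin> \<int>\<^sub>\<le>\<^sub>0"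
    using \<beta> by (simp_all add: x_def y_def)
  have "pochhammer (- of_nat k) j = complex_of_real (pochhammer (- real k) j)" for j
    by (metis of_real_minus of_real_of_nat_eq pochhammer_of_real)
  then have "(\<Prod>a\<leftarrow>[- of_nat k, complex_of_real (real k + 2 * l), y]. pochhammer a j) /
        (\<Prod>b\<leftarrow>[complex_of_real (2 * \<beta>), complex_of_real (l + 1/2)]. pochhammer b j) * 1 ^ j / fact j
      = of_real (gegenbauer_coeff k l j) * pochhammer y j / pochhammer (x + y) j" for j
    unfolding xy
    by (simp only: list.map prod_list.Cons prod_list.Nil mult_1_right power_one pochhammer_of_real)
       (simp add: gegenbauer_coeff_def field_simps)
  then have "gegenbauer_tanh_fourier \<beta> l k \<xi> =
      of_real (2 powr (2 * \<beta> - 1) * pochhammer (2 * l) k / fact k) * Beta x y *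
      (\<Sum>j\<le>k. of_real (gegenbauer_coeff k l j) * pochhammer y j / pochhammer (x + y) j)"
    by (simp add: gegenbauer_tanh_fourier_def hypergeom_minus_of_nat x_def y_def Beta_commute)
  also have "\<dots> = (\<Sum>j\<le>k. of_real (pochhammer (2 * l) k / fact k * gegenbauer_coeff k l j) *
      (of_real (2 powr (2 * \<beta> - 1)) * Beta x (y + of_nat j)))"
    unfolding sum_distrib_left Beta_plus_of_nat_right[OF nonpoles]
    by (intro sum.cong refl) (simp add: field_simps)
  finally show ?thesis
    by (simp add: x_def y_def)
qed

lemma
  fixes \<beta> \<xi> :: real
  assumes \<beta>: "\<beta> > 0"
  shows integrable_gegenbauer_tanh_fourier:
      "integrable lborel (\<lambda>t. cis (- (\<xi> * t)) * of_real (gegenbauer_tanh \<beta> l k t))"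
    and integral_gegenbauer_tanh_fourier:
      "(LINT t|lborel. cis (- (\<xi> * t)) * of_real (gegenbauer_tanh \<beta> l k t)) =
       gegenbauer_tanh_fourier \<beta> l k \<xi>"
proof -
  define K where "K = (\<lambda>j t. cis (- (\<xi> * t)) *
      of_real ((1 - (tanh t)\<^sup>2) powr \<beta> * ((1 - tanh t) / 2) ^ j))"
  have expand: "cis (- (\<xi> * t)) * of_real (gegenbauer_tanh \<beta> l k t) =
      (\<Sum>j\<le>k. of_real (pochhammer (2 * l) k / fact k * gegenbauer_coeff k l j) * K j t)" for t
    by (simp add: gegenbauer_tanh_def K_def gegenbauer_eq_sum sum_distrib_left mult_ac)
  have K_integrable: "integrable lborel (K j)" for j
    unfolding K_def by (rule integrable_tanh_weight_fourier[OF \<beta>])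
  then show "integrable lborel (\<lambda>t. cis (- (\<xi> * t)) * of_real (gegenbauer_tanh \<beta> l k t))"
    unfolding expand by simp
  show "(LINT t|lborel. cis (- (\<xi> * t)) * of_real (gegenbauer_tanh \<beta> l k t)) =
      gegenbauer_tanh_fourier \<beta> l k \<xi>"
    unfolding expand gegenbauer_tanh_fourier_eq_Beta_sum[OF \<beta>] using K_integrable
    by (simp add: K_def integral_tanh_weight_fourier[OF \<beta>] del: of_real_mult)
qed

lemma one_minus_sum_upsilon_squared:
  "1 - (\<Sum>i<j. (upsilon y i)\<^sup>2) = (\<Prod>i<j. 1 - (tanh (y i))\<^sup>2)"
proof (induction j)
  case (Suc j)
  have "(\<Prod>i<j. 1 - (tanh (y i))\<^sup>2) \<ge> 0"
    using one_minus_tanh_squared_pos by (intro prod_nonneg) (auto intro: less_imp_le)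
  then have "(upsilon y j)\<^sup>2 = (tanh (y j))\<^sup>2 * (\<Prod>i<j. 1 - (tanh (y i))\<^sup>2)"
    by (simp add: upsilon_def power_mult_distrib)
  with Suc show ?case by (simp add: algebra_simps)
qed simp

lemma prod_lessThan_nested_swap:
  "(\<Prod>j<s. \<Prod>i<j. F i j) = (\<Prod>i<s. \<Prod>j\<in>{Suc i..<s}. F i j)"
proof (induction s)
  case (Suc s)
  have "(\<Prod>i<s. \<Prod>j\<in>{Suc i..<Suc s}. F i j) = (\<Prod>i<s. (\<Prod>j\<in>{Suc i..<s}. F i j) * F i s)"
    by (intro prod.cong refl) (simp add: prod.atLeastLessThan_Suc)
  with Suc show ?case by (simp add: prod.distrib)
qed simp

lemma ball_poly_upsilon:
  "ball_poly s mu k (upsilon y) =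
    (\<Prod>i<s. (1 - (tanh (y i))\<^sup>2) powr (real (\<Sum>j\<in>{Suc i..<s}. k ! j) / 2)) *
    (\<Prod>j<s. gegenbauer (k ! j) (ball_lambda s mu k j) (tanh (y j)))"
proof -
  define w where "w = (\<lambda>i. 1 - (tanh (y i))\<^sup>2)"
  have w: "w i > 0" for i
    unfolding w_def by (rule one_minus_tanh_squared_pos)
  have partial: "1 - (\<Sum>i<j. (upsilon y i)\<^sup>2) = (\<Prod>i<j. w i)" for j
    unfolding w_def by (rule one_minus_sum_upsilon_squared)
  have w_prod: "(\<Prod>i<j. w i) > 0" for j
    using w by (simp add: prod_pos)
  have "sqrt P ^ n = P powr (real n / 2)" if "P > 0" for P :: real and n
    using that by (simp add: sqrt_def root_powr_inverse powr_realpow[symmetric] powr_powr)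
  from this[OF w_prod] have "sqrt (\<Prod>i<j. w i) ^ (k ! j) = (\<Prod>i<j. w i powr (real (k ! j) / 2))" for j
    using w by (simp add: prod_powr_distrib less_imp_le)
  moreover have "upsilon y j / sqrt (\<Prod>i<j. w i) = tanh (y j)" for j
  proof -
    have "upsilon y j = tanh (y j) * sqrt (\<Prod>i<j. w i)"
      by (simp add: upsilon_def w_def)
    then show ?thesis using w_prod[of j] by (simp del: prod_zero_iff)
  qed
  ultimately have "ball_poly s mu k (upsilon y) =
      (\<Prod>j<s. \<Prod>i<j. w i powr (real (k ! j) / 2)) *
      (\<Prod>j<s. gegenbauer (k ! j) (ball_lambda s mu k j) (tanh (y j)))"
    unfolding ball_poly_def partial by (simp add: prod.distrib)
  also have "(\<Prod>j<s. \<Prod>i<j. w i powr (real (k ! j) / 2)) =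
      (\<Prod>i<s. w i powr (real (\<Sum>j\<in>{Suc i..<s}. k ! j) / 2))"
    unfolding prod_lessThan_nested_swap
    using w by (intro prod.cong refl) (simp add: powr_sum less_imp_neq[symmetric] sum_divide_distrib)
  finally show ?thesis by (simp add: w_def)
qed

text \<open>The exponent of \<open>1 - tanh\<^sup>2 y\<^sub>j\<close> in \<open>f\<^sub>s\<close>: the weight exponent \<open>a + (s - 1 - j)/4\<close> plus the
  half-powers \<open>k\<^sub>i / 2\<close>, \<open>i > j\<close>, coming from the square roots in the later ball-polynomial factors.\<close>
definition f_fun_exponent :: "nat \<Rightarrow> nat list \<Rightarrow> real \<Rightarrow> nat \<Rightarrow> real" where
  "f_fun_exponent s k a j = a + (real s - 1 - real j) / 4 + real (\<Sum>i\<in>{Suc j..<s}. k ! i) / 2"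

lemma f_fun_eq_prod_gegenbauer_tanh:
  "f_fun s k a mu y =
    (\<Prod>j<s. gegenbauer_tanh (f_fun_exponent s k a j) (ball_lambda s mu k j) (k ! j) (y j))"
  unfolding f_fun_def ball_poly_upsilon gegenbauer_tanh_def f_fun_exponent_def
  by (simp add: prod.distrib[symmetric] powr_add[symmetric] mult_ac add_ac)

lemma f_fun_exponent_pos:
  assumes "a > 0" and "j < s"
  shows "f_fun_exponent s k a j > 0"
proof -
  have "0 \<le> real (\<Sum>i\<in>{Suc j..<s}. k ! i)" and "0 \<le> real s - 1 - real j"
    using assms(2) by (simp_all add: sum_nonneg)
  with assms(1) show ?thesis
    unfolding f_fun_exponent_def by (intro add_pos_nonneg) simp_all
qed

lemma cis_minus_sum: "cis (- sum f A) = (\<Prod>j\<in>A. cis (- f j))"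
  by (cases "finite A") (simp_all add: cis_conv_exp sum_negf[symmetric] sum_distrib_left exp_sum)

lemma fourier_f_fun_eq_prod:
  assumes "a > 0"
  shows "fourier s (f_fun s k a mu) \<xi> =
    (\<Prod>j<s. gegenbauer_tanh_fourier (f_fun_exponent s k a j) (ball_lambda s mu k j) (k ! j) (\<xi> j))"
proof -
  interpret product_sigma_finite "\<lambda>_::nat. lborel::real measure" by standard
  let ?g = "\<lambda>j t. cis (- (\<xi> j * t)) *
      of_real (gegenbauer_tanh (f_fun_exponent s k a j) (ball_lambda s mu k j) (k ! j) t)"
  have "fourier s (f_fun s k a mu) \<xi> = (LINT y | PiM {..<s} (\<lambda>_. lborel). (\<Prod>j<s. ?g j (y j)))"
    unfolding fourier_def f_fun_eq_prod_gegenbauer_tanh cis_minus_sum of_real_prod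
    by (simp add: prod.distrib)
  also have "\<dots> = (\<Prod>j<s. integral\<^sup>L lborel (?g j))"
    using assms f_fun_exponent_pos
    by (intro product_integral_prod) (auto intro: integrable_gegenbauer_tanh_fourier)
  finally show ?thesis
    using assms f_fun_exponent_pos by (simp add: integral_gegenbauer_tanh_fourier)
qed

lemma f_fun_exponent_Cons_Suc: "f_fun_exponent (Suc s) (m # k) a (Suc j) = f_fun_exponent s k a j"
  unfolding f_fun_exponent_def sum.shift_bounds_Suc_ivl nth_Cons_Suc by simp

lemma ball_lambda_Cons_Suc: "ball_lambda (Suc s) mu (m # k) (Suc j) = ball_lambda s mu k j"
  unfolding ball_lambda_def sum.shift_bounds_Suc_ivl nth_Cons_Suc by simp

lemma fourier_f_fun_Cons:
  assumes "a > 0" and "length k = s"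
  shows "fourier (Suc s) (f_fun (Suc s) (m # k) a mu) \<xi> =
    gegenbauer_tanh_fourier (a + real (sum_list k) / 2 + real s / 4) (real (sum_list k) + mu + real s / 2)
      m (\<xi> 0) *
    fourier s (f_fun s k a mu) (\<lambda>i. \<xi> (Suc i))"
proof -
  have "(\<Sum>i\<in>{Suc 0..<Suc s}. (m # k) ! i) = sum_list k"
    unfolding sum.shift_bounds_Suc_ivl nth_Cons_Suc
    using assms(2) by (simp add: sum_list_sum_nth)
  then have "f_fun_exponent (Suc s) (m # k) a 0 = a + real (sum_list k) / 2 + real s / 4"
    and "ball_lambda (Suc s) mu (m # k) 0 = real (sum_list k) + mu + real s / 2"
    by (simp_all add: f_fun_exponent_def ball_lambda_def)
  then show ?thesis
    unfolding fourier_f_fun_eq_prod[OF assms(1)] prod.lessThan_Suc_shift f_fun_exponent_Cons_Suc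
      ball_lambda_Cons_Suc nth_Cons_Suc nth_Cons_0
    by simp
qed

lemma fourier_f_fun_snoc:
  assumes "a > 0" and "length k = s"
  shows "fourier (Suc s) (f_fun (Suc s) (k @ [m]) a mu) \<xi> =
    gegenbauer_tanh_fourier a mu m (\<xi> s) *
    fourier s (f_fun s k (a + real m / 2 + 1/4) (mu + real m + 1/2)) \<xi>"
proof -
  have sum_snoc: "(\<Sum>i\<in>{Suc j..<Suc s}. (k @ [m]) ! i) = (\<Sum>i\<in>{Suc j..<s}. k ! i) + m"
    if "j < s" for j
    using assms(2) that by (simp add: sum.atLeastLessThan_Suc nth_append)
  have "f_fun_exponent (Suc s) (k @ [m]) a j = f_fun_exponent s k (a + real m / 2 + 1/4) j"
    and "ball_lambda (Suc s) mu (k @ [m]) j = ball_lambda s (mu + real m + 1/2) k j"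
    and "(k @ [m]) ! j = k ! j" if "j < s" for j
    using that assms(2)
    by (simp_all add: f_fun_exponent_def ball_lambda_def sum_snoc nth_append field_simps)
  moreover have "f_fun_exponent (Suc s) (k @ [m]) a s = a" and "ball_lambda (Suc s) mu (k @ [m]) s = mu"
    and "(k @ [m]) ! s = m"
    using assms(2) by (simp_all add: f_fun_exponent_def ball_lambda_def nth_append)
  moreover have "a + real m / 2 + 1/4 > 0"
    using assms(1) by simp
  ultimately show ?thesis
    unfolding fourier_f_fun_eq_prod[OF assms(1)] by (simp add: fourier_f_fun_eq_prod mult.commute)
qed

theorem theorem3p1:
  fixes r :: nat and a mu :: real and n :: "nat list" and \<xi> :: "nat \<Rightarrow> real"
  assumes "r \<ge> 1" and "length n = r" and "a > 0" and "mu > - 1/2"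
  shows "(fourier r (f_fun r n a mu) \<xi> =
      complex_of_real (2 powr (real (sum_list (tl n)) + 2 * a + (real r - 3) / 2) *
          pochhammer (2 * (real (sum_list (tl n)) + mu + (real r - 1) / 2)) (hd n) / fact (hd n))
      * Beta (complex_of_real (a + real (sum_list (tl n)) / 2 + (real r - 1) / 4) + \<i> * complex_of_real (\<xi> 0) / 2)
             (complex_of_real (a + real (sum_list (tl n)) / 2 + (real r - 1) / 4) - \<i> * complex_of_real (\<xi> 0) / 2)
      * hypergeom
          [- complex_of_real (real (hd n)),
           complex_of_real (real (hd n) + 2 * (real (sum_list (tl n)) + mu + (real r - 1) / 2)),
           complex_of_real (a + real (sum_list (tl n)) / 2 + (real r - 1) / 4) + \<i> * complex_of_real (\<xi> 0) / 2]
          [complex_of_real (real (sum_list (tl n)) + 2 * a + (real r - 1) / 2),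
           complex_of_real (real (sum_list (tl n)) + mu + real r / 2)] 1
      * fourier (r - 1) (f_fun (r - 1) (tl n) a mu) (\<lambda>i. \<xi> (Suc i))) \<and>
    (fourier r (f_fun r n a mu) \<xi> =
      complex_of_real (2 powr (2 * a - 1) * pochhammer (2 * mu) (last n) / fact (last n))
      * Beta (complex_of_real a + \<i> * complex_of_real (\<xi> (r - 1)) / 2)
             (complex_of_real a - \<i> * complex_of_real (\<xi> (r - 1)) / 2)
      * hypergeom
          [- complex_of_real (real (last n)),
           complex_of_real (real (last n) + 2 * mu),
           complex_of_real a + \<i> * complex_of_real (\<xi> (r - 1)) / 2]
          [complex_of_real (2 * a), complex_of_real (mu + 1/2)] 1
      * fourier (r - 1) (f_fun (r - 1) (butlast n) (a + real (last n) / 2 + 1/4) (mu + real (last n) + 1/2)) \<xi>)"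
proof -
  obtain s where r: "r = Suc s" using assms(1) by (cases r) auto
  have "n \<noteq> []" using assms(1,2) by auto
  then have n: "hd n # tl n = n" "butlast n @ [last n] = n" by simp_all
  have len: "length (tl n) = s" "length (butlast n) = s" using assms(2) r by simp_all
  define S where "S = real (sum_list (tl n))"
  have first: "fourier r (f_fun r n a mu) \<xi> =
      gegenbauer_tanh_fourier (a + S / 2 + (real r - 1) / 4) (S + mu + (real r - 1) / 2) (hd n) (\<xi> 0) *
      fourier (r - 1) (f_fun (r - 1) (tl n) a mu) (\<lambda>i. \<xi> (Suc i))"
    using fourier_f_fun_Cons[OF assms(3) len(1), of "hd n" mu \<xi>]
    unfolding n(1) r S_def by simp
  have last: "fourier r (f_fun r n a mu) \<xi> =
      gegenbauer_tanh_fourier a mu (last n) (\<xi> (r - 1)) *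
      fourier (r - 1) (f_fun (r - 1) (butlast n) (a + real (last n) / 2 + 1/4) (mu + real (last n) + 1/2)) \<xi>"
    using fourier_f_fun_snoc[OF assms(3) len(2), of "last n" mu \<xi>] unfolding n(2) r by simp
  have "2 * (a + S / 2 + (real r - 1) / 4) - 1 = S + 2 * a + (real r - 3) / 2"
    and "2 * (a + S / 2 + (real r - 1) / 4) = S + 2 * a + (real r - 1) / 2"
    and "S + mu + (real r - 1) / 2 + 1/2 = S + mu + real r / 2"
    by (simp_all add: field_simps)
  with first last show ?thesis
    unfolding gegenbauer_tanh_fourier_def S_def[symmetric] by (simp only:)
qed

end
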